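(* Let $G$ be a finite group and $p$ a prime number, and let $r=\max\{d((G/p(G))^{\mathrm{ab}}),1\}$. Then there exist subgroups $Q_1,\dots,Q_r$ of $G$, each of which is cyclic-by-$p$, such that $G$ is generated by the union of the conjugacy classes $Q_1^G\cup\dots\cup Q_r^G$, where $Q_i^G=\{gxg^{-1}: g\in G, x\in Q_i\}$.
   Context: $d(H)$ is the minimal number of generators of a finite group $H$, $H^{\mathrm{ab}}$ its abelianization, and $p(H)$ the subgroup generated by the $p$-Sylow subgroups of $H$. A group $Q$ is cyclic-by-$p$ if it has a normal $p$-subgroup $P$ with $Q/P$ cyclic. *)

theory Defs
  imports "HOL-Algebra.Algebra" "HOL-Computational_Algebra.Primes"
begin

definition min_gens :: "('b, 'c) monoid_scheme \<Rightarrow> nat" where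
  "min_gens H = (LEAST n. \<exists>S. S \<subseteq> carrier H \<and> finite S \<and> card S = n
                              \<and> generate H S = carrier H)"

definition abelianization :: "('b, 'c) monoid_scheme \<Rightarrow> 'b set monoid" where
  "abelianization H = H Mod (derived H (carrier H))"

definition p_group :: "nat \<Rightarrow> ('b, 'c) monoid_scheme \<Rightarrow> bool" where
  "p_group p H \<longleftrightarrow> group H \<and> finite (carrier H) \<and> (\<exists>k. card (carrier H) = p ^ k)"

definition sylow_subgroup :: "('b, 'c) monoid_scheme \<Rightarrow> nat \<Rightarrow> 'b set \<Rightarrow> bool" where
  "sylow_subgroup G p P \<longleftrightarrow> subgroup P G \<and> card P = p ^ multiplicity p (order G)"

definition sylow_gen :: "('b, 'c) monoid_scheme \<Rightarrow> nat \<Rightarrow> 'b set" where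
  "sylow_gen G p = generate G (\<Union> {P. sylow_subgroup G p P})"

definition is_cyclic :: "('b, 'c) monoid_scheme \<Rightarrow> bool" where
  "is_cyclic H \<longleftrightarrow> group H \<and> (\<exists>x \<in> carrier H. generate H {x} = carrier H)"

definition cyclic_by_p :: "('b, 'c) monoid_scheme \<Rightarrow> nat \<Rightarrow> 'b set \<Rightarrow> bool" where
  "cyclic_by_p G p Q \<longleftrightarrow> (\<exists>P. P \<lhd> (G\<lparr>carrier := Q\<rparr>)
        \<and> p_group p (G\<lparr>carrier := P\<rparr>)
        \<and> is_cyclic ((G\<lparr>carrier := Q\<rparr>) Mod P))"

definition conj_closure :: "('b, 'c) monoid_scheme \<Rightarrow> 'b set \<Rightarrow> 'b set" where
  "conj_closure G Q = {g \<otimes>\<^bsub>G\<^esub> x \<otimes>\<^bsub>G\<^esub> inv\<^bsub>G\<^esub> g | g x. g \<in> carrier G \<and> x \<in> Q}"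

end

theory Submission
  imports Defs
begin

text \<open>Let \<open>N = p(G)\<close> and \<open>r = max d 1\<close>, \<open>d = d((G/N)\<^sup>a\<^sup>b)\<close>. Lifting generators of
  \<open>(G/N)\<^sup>a\<^sup>b\<close> gives \<open>z\<^sub>1, \<dots>, z\<^sub>r\<close> whose conjugacy classes generate \<open>G\<close> modulo \<open>G' N\<close>.
  Going down a chief series of \<open>G\<close> above \<open>N\<close>, one step \<open>M \<subset> M'\<close> at a time, the \<open>z\<^sub>i\<close>
  can be corrected so that they generate modulo \<open>M\<close>: when \<open>M'/M\<close> is abelian nothing needs to
  change, and otherwise \<open>z\<^sub>1\<close> is multiplied by a commutator of \<open>M'\<close> that is not central
  modulo \<open>M\<close>. Arriving at \<open>M = N\<close>, the Frattini argument writes \<open>z\<^sub>1 = n a\<close> with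
  \<open>n \<in> N\<close> and \<open>a\<close> normalising a Sylow \<open>p\<close>-subgroup \<open>S\<close>. Then \<open>Q\<^sub>1 = \<langle>S, a\<rangle>\<close>
  and \<open>Q\<^sub>i = \<langle>z\<^sub>i\<rangle>\<close> are cyclic-by-\<open>p\<close>, and the normal subgroup they generate contains all
  conjugates of \<open>S\<close>, hence \<open>N\<close>, hence every \<open>z\<^sub>i\<close>, hence \<open>G\<close>.\<close>

section \<open>Normal closures\<close>

definition normal_closure :: "('a, 'b) monoid_scheme \<Rightarrow> 'a set \<Rightarrow> 'a set" where
  "normal_closure G A = generate G (conj_closure G A)"

context group
begin

lemma conj_closure_subset_carrier: "Q \<subseteq> carrier G \<Longrightarrow> conj_closure G Q \<subseteq> carrier G"
  unfolding conj_closure_def by auto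

lemma conj_closure_superset: "Q \<subseteq> carrier G \<Longrightarrow> Q \<subseteq> conj_closure G Q"
  unfolding conj_closure_def by force

lemma conj_closure_UN: "conj_closure G (\<Union>i\<in>I. Q i) = (\<Union>i\<in>I. conj_closure G (Q i))"
  unfolding conj_closure_def by auto

lemma conj_closure_conj:
  assumes "Q \<subseteq> carrier G" "g \<in> carrier G" "a \<in> conj_closure G Q"
  shows "g \<otimes> a \<otimes> inv g \<in> conj_closure G Q"
proof -
  obtain h x where hx: "a = h \<otimes> x \<otimes> inv h" "h \<in> carrier G" "x \<in> Q"
    using assms(3) unfolding conj_closure_def by blast
  then have "g \<otimes> a \<otimes> inv g = (g \<otimes> h) \<otimes> x \<otimes> inv (g \<otimes> h)"
    using assms(1,2) by (auto simp: m_assoc inv_mult_group)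
  then show ?thesis
    unfolding conj_closure_def using hx assms(2) by blast
qed

lemma conj_closure_subset_normal: "N \<lhd> G \<Longrightarrow> Q \<subseteq> N \<Longrightarrow> conj_closure G Q \<subseteq> N"
  unfolding conj_closure_def using normal.inv_op_closed2 by fastforce

lemma conj_closure_normal:
  assumes "N \<lhd> G"
  shows "conj_closure G N = N"
proof (rule antisym)
  show "conj_closure G N \<subseteq> N" by (rule conj_closure_subset_normal[OF assms order_refl])
  show "N \<subseteq> conj_closure G N"
    by (rule conj_closure_superset) (rule subgroup.subset[OF normal_imp_subgroup[OF assms]])
qed

lemma normal_closure_normal: "A \<subseteq> carrier G \<Longrightarrow> normal_closure G A \<lhd> G"
  unfolding normal_closure_def
  by (intro normal_generateI conj_closure_subset_carrier conj_closure_conj)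

lemma normal_closure_superset:
  assumes "A \<subseteq> carrier G"
  shows "A \<subseteq> normal_closure G A"
proof -
  have "conj_closure G A \<subseteq> normal_closure G A"
    unfolding normal_closure_def by (rule subsetI, rule generate.incl)
  with conj_closure_superset[OF assms] show ?thesis by (rule subset_trans)
qed

lemma normal_closure_subset_carrier: "A \<subseteq> carrier G \<Longrightarrow> normal_closure G A \<subseteq> carrier G"
  using normal_closure_normal normal_imp_subgroup subgroup.subset by blast

lemma generate_subset_normal_closure: "A \<subseteq> carrier G \<Longrightarrow> generate G A \<subseteq> normal_closure G A"
  by (intro generate_subgroup_incl normal_closure_superset normal_imp_subgroup normal_closure_normal)

lemma normal_closure_least: "K \<lhd> G \<Longrightarrow> A \<subseteq> K \<Longrightarrow> normal_closure G A \<subseteq> K"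
  unfolding normal_closure_def
  by (intro generate_subgroup_incl conj_closure_subset_normal normal_imp_subgroup)

lemma conj_closure_Un: "conj_closure G (A \<union> B) = conj_closure G A \<union> conj_closure G B"
  unfolding conj_closure_def by auto

lemma normal_closure_Un_normal:
  "N \<lhd> G \<Longrightarrow> normal_closure G (A \<union> N) = generate G (conj_closure G A \<union> N)"
  unfolding normal_closure_def by (simp add: conj_closure_Un conj_closure_normal)

lemma normal_closure_eq_carrier_trans:
  assumes "normal_closure G A = carrier G" "B \<subseteq> carrier G" "A \<subseteq> normal_closure G B"
  shows "normal_closure G B = carrier G"
proof -
  have normal: "normal_closure G B \<lhd> G" by (rule normal_closure_normal[OF assms(2)])
  show ?thesis
  proof (rule antisym)
    show "normal_closure G B \<subseteq> carrier G"
      by (rule subgroup.subset[OF normal_imp_subgroup[OF normal]])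
    show "carrier G \<subseteq> normal_closure G B"
      using normal_closure_least[OF normal assms(3)] assms(1) by simp
  qed
qed

end

section \<open>Commutators modulo a normal subgroup\<close>

definition centralizer_mod :: "('a, 'b) monoid_scheme \<Rightarrow> 'a set \<Rightarrow> 'a set \<Rightarrow> 'a set" where
  "centralizer_mod G M A =
     {x \<in> carrier G. \<forall>y \<in> A. x \<otimes>\<^bsub>G\<^esub> y \<otimes>\<^bsub>G\<^esub> inv\<^bsub>G\<^esub> x \<otimes>\<^bsub>G\<^esub> inv\<^bsub>G\<^esub> y \<in> M}"

context group
begin

lemma inv_mult_cancel_left: "x \<in> carrier G \<Longrightarrow> z \<in> carrier G \<Longrightarrow> inv x \<otimes> (x \<otimes> z) = z"
  by (simp add: m_assoc[symmetric])

lemma mult_inv_cancel_left: "x \<in> carrier G \<Longrightarrow> z \<in> carrier G \<Longrightarrow> x \<otimes> (inv x \<otimes> z) = z"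
  by (simp add: m_assoc[symmetric])

lemma commutator_inv:
  "x \<in> carrier G \<Longrightarrow> y \<in> carrier G \<Longrightarrow>
     inv (x \<otimes> y \<otimes> inv x \<otimes> inv y) = y \<otimes> x \<otimes> inv y \<otimes> inv x"
  by (simp add: inv_mult_group m_assoc)

lemma commutator_mult_left:
  assumes "x \<in> carrier G" "y \<in> carrier G" "w \<in> carrier G"
  shows "x \<otimes> y \<otimes> w \<otimes> inv (x \<otimes> y) \<otimes> inv w =
    x \<otimes> (y \<otimes> w \<otimes> inv y \<otimes> inv w) \<otimes> inv x \<otimes> (x \<otimes> w \<otimes> inv x \<otimes> inv w)"
  using assms by (simp add: m_assoc inv_mult_group inv_mult_cancel_left)

lemma commutator_inv_left:
  assumes "x \<in> carrier G" "y \<in> carrier G"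
  shows "inv x \<otimes> y \<otimes> inv (inv x) \<otimes> inv y = inv x \<otimes> inv (x \<otimes> y \<otimes> inv x \<otimes> inv y) \<otimes> x"
  using assms by (simp add: m_assoc inv_mult_group inv_mult_cancel_left)

lemma commutator_conj:
  assumes "g \<in> carrier G" "x \<in> carrier G" "y \<in> carrier G"
  shows "g \<otimes> (x \<otimes> y \<otimes> inv x \<otimes> inv y) \<otimes> inv g =
    (g \<otimes> x \<otimes> inv g) \<otimes> (g \<otimes> y \<otimes> inv g) \<otimes> inv (g \<otimes> x \<otimes> inv g) \<otimes> inv (g \<otimes> y \<otimes> inv g)"
  using assms by (simp add: m_assoc inv_mult_group inv_mult_cancel_left)

lemma commutator_mem_normal_left:
  assumes "K \<lhd> G" "x \<in> K" "y \<in> carrier G"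
  shows "x \<otimes> y \<otimes> inv x \<otimes> inv y \<in> K"
proof -
  interpret K: normal K G by (rule assms(1))
  have "x \<in> carrier G" using K.mem_carrier[OF assms(2)] .
  moreover have "y \<otimes> inv x \<otimes> inv y \<in> K"
    using K.inv_op_closed2[OF assms(3)] assms(2) by blast
  ultimately show ?thesis
    using K.m_closed[OF assms(2)] assms(3) by (simp add: m_assoc)
qed

lemma commutator_mem_normal_right:
  assumes "K \<lhd> G" "x \<in> carrier G" "y \<in> K"
  shows "x \<otimes> y \<otimes> inv x \<otimes> inv y \<in> K"
proof -
  interpret K: normal K G by (rule assms(1))
  show ?thesis
    using K.m_closed[OF K.inv_op_closed2[OF assms(2,3)] K.m_inv_closed[OF assms(3)]] .
qed

lemma centralizer_mod_subgroup:
  assumes M: "M \<lhd> G" and A: "A \<subseteq> carrier G"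
  shows "subgroup (centralizer_mod G M A) G"
proof
  interpret M: normal M G by (rule M)
  show "centralizer_mod G M A \<subseteq> carrier G"
    unfolding centralizer_mod_def by auto
  show "\<one> \<in> centralizer_mod G M A"
    unfolding centralizer_mod_def using A by (auto simp: M.one_closed)
next
  interpret M: normal M G by (rule M)
  fix x assume x: "x \<in> centralizer_mod G M A"
  then have xc: "x \<in> carrier G" and xA: "\<And>y. y \<in> A \<Longrightarrow> x \<otimes> y \<otimes> inv x \<otimes> inv y \<in> M"
    unfolding centralizer_mod_def by auto
  have "inv x \<otimes> y \<otimes> inv (inv x) \<otimes> inv y \<in> M" if y: "y \<in> A" for y
  proof -
    have "inv x \<otimes> inv (x \<otimes> y \<otimes> inv x \<otimes> inv y) \<otimes> inv (inv x) \<in> M"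
      using xc xA[OF y] by (intro M.inv_op_closed2 M.m_inv_closed) auto
    then show ?thesis
      using commutator_inv_left[OF xc, of y] y A xc by (auto simp del: inv_inv)
  qed
  then show "inv x \<in> centralizer_mod G M A"
    unfolding centralizer_mod_def using xc by simp
  fix x' assume x': "x' \<in> centralizer_mod G M A"
  then have x'c: "x' \<in> carrier G" and x'A: "\<And>y. y \<in> A \<Longrightarrow> x' \<otimes> y \<otimes> inv x' \<otimes> inv y \<in> M"
    unfolding centralizer_mod_def by auto
  have "x \<otimes> x' \<otimes> y \<otimes> inv (x \<otimes> x') \<otimes> inv y \<in> M" if y: "y \<in> A" for y
  proof -
    have "x \<otimes> (x' \<otimes> y \<otimes> inv x' \<otimes> inv y) \<otimes> inv x \<otimes> (x \<otimes> y \<otimes> inv x \<otimes> inv y) \<in> M"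
      by (rule M.m_closed[OF M.inv_op_closed2[OF xc x'A[OF y]] xA[OF y]])
    then show ?thesis
      using commutator_mult_left[OF xc x'c, of y] y A by auto
  qed
  then show "x \<otimes> x' \<in> centralizer_mod G M A"
    unfolding centralizer_mod_def using xc x'c by simp
qed

lemma centralizer_mod_normal:
  assumes M: "M \<lhd> G" and A: "A \<lhd> G"
  shows "centralizer_mod G M A \<lhd> G"
proof -
  interpret M: normal M G by (rule M)
  interpret A: normal A G by (rule A)
  show ?thesis
  proof (rule normal_invI[OF centralizer_mod_subgroup[OF M A.subset]])
    fix g x assume g: "g \<in> carrier G" and x: "x \<in> centralizer_mod G M A"
    then have xc: "x \<in> carrier G" unfolding centralizer_mod_def by blast
    show "g \<otimes> x \<otimes> inv g \<in> centralizer_mod G M A"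
      unfolding centralizer_mod_def
    proof (intro CollectI conjI ballI)
      fix y assume y: "y \<in> A"
      then have yc: "y \<in> carrier G" by (rule A.mem_carrier)
      have "inv g \<otimes> y \<otimes> g \<in> A" by (rule A.inv_op_closed1[OF g y])
      with x have "x \<otimes> (inv g \<otimes> y \<otimes> g) \<otimes> inv x \<otimes> inv (inv g \<otimes> y \<otimes> g) \<in> M"
        using g unfolding centralizer_mod_def by simp
      then have "g \<otimes> (x \<otimes> (inv g \<otimes> y \<otimes> g) \<otimes> inv x \<otimes> inv (inv g \<otimes> y \<otimes> g)) \<otimes> inv g \<in> M"
        by (rule M.inv_op_closed2[OF g])
      moreover have "g \<otimes> (inv g \<otimes> y \<otimes> g) \<otimes> inv g = y"
        using g yc by (simp add: m_assoc mult_inv_cancel_left)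
      ultimately show "g \<otimes> x \<otimes> inv g \<otimes> y \<otimes> inv (g \<otimes> x \<otimes> inv g) \<otimes> inv y \<in> M"
        using commutator_conj[OF g xc, of "inv g \<otimes> y \<otimes> g"] g yc by simp
    qed (use g xc in simp)
  qed
qed

lemma derived_subset_normal_if_generated:
  assumes K: "K \<lhd> G" and gen: "generate G (C \<union> A) = carrier G"
    and C: "C \<subseteq> K" and A: "A \<subseteq> carrier G"
    and comm: "\<And>x y. x \<in> A \<Longrightarrow> y \<in> A \<Longrightarrow> x \<otimes> y \<otimes> inv x \<otimes> inv y \<in> K"
  shows "derived G (carrier G) \<subseteq> K"
proof -
  interpret K: normal K G by (rule K)
  have comm_C: "c \<otimes> y \<otimes> inv c \<otimes> inv y \<in> K" if "c \<in> C" "y \<in> carrier G" for c y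
    using commutator_mem_normal_left[OF K] that C by blast
  have "C \<union> A \<subseteq> centralizer_mod G K A"
    unfolding centralizer_mod_def using C A comm comm_C by auto
  then have A_central: "carrier G \<subseteq> centralizer_mod G K A"
    using generate_subgroup_incl[OF _ centralizer_mod_subgroup[OF K A]] gen by metis
  have comm_A: "a \<otimes> y \<otimes> inv a \<otimes> inv y \<in> K" if a: "a \<in> A" and y: "y \<in> carrier G" for a y
  proof -
    have "y \<otimes> a \<otimes> inv y \<otimes> inv a \<in> K"
      using A_central y a unfolding centralizer_mod_def by blast
    then have "inv (y \<otimes> a \<otimes> inv y \<otimes> inv a) \<in> K" by (rule K.m_inv_closed)
    then show ?thesis using commutator_inv y a A by auto
  qed
  have "C \<union> A \<subseteq> centralizer_mod G K (carrier G)"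
    unfolding centralizer_mod_def using C A comm_A comm_C by auto
  then have "carrier G \<subseteq> centralizer_mod G K (carrier G)"
    using generate_subgroup_incl[OF _ centralizer_mod_subgroup[OF K order_refl]] gen by metis
  then have "derived_set G (carrier G) \<subseteq> K"
    unfolding centralizer_mod_def by auto
  then show ?thesis
    unfolding derived_def by (rule generate_subgroup_incl[OF _ K.subgroup_axioms])
qed

end

section \<open>Normal generation modulo a normal subgroup\<close>

definition normal_generators_mod :: "('a, 'b) monoid_scheme \<Rightarrow> nat \<Rightarrow> (nat \<Rightarrow> 'a) \<Rightarrow> 'a set \<Rightarrow> bool" where
  "normal_generators_mod G r z N \<longleftrightarrow>
     z \<in> {..<r} \<rightarrow> carrier G \<and> normal_closure G (z ` {..<r} \<union> N) = carrier G"

context group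
begin

lemma normal_subgroup_minimal_induct [consumes 2, case_names carrier step]:
  assumes fin: "finite (carrier G)" and M: "M \<lhd> G"
    and top: "P (carrier G)"
    and step: "\<And>M M'. M \<lhd> G \<Longrightarrow> M' \<lhd> G \<Longrightarrow> M \<subset> M'
      \<Longrightarrow> (\<And>W. W \<lhd> G \<Longrightarrow> M \<subset> W \<Longrightarrow> W \<subseteq> M' \<Longrightarrow> W = M') \<Longrightarrow> P M' \<Longrightarrow> P M"
  shows "P M"
  using M
proof (induction "card (carrier G) - card M" arbitrary: M rule: less_induct)
  case (less M)
  have Msub: "M \<subseteq> carrier G" using normal_imp_subgroup[OF less.prems] subgroup.subset by blast
  show ?case
  proof (cases "M = carrier G")
    case True
    with top show ?thesis by simp
  next
    case False
    obtain M' where M': "M' \<lhd> G" "M \<subset> M'"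
      and least: "\<And>W. W \<lhd> G \<Longrightarrow> M \<subset> W \<Longrightarrow> card M' \<le> card W"
      using ex_has_least_nat[of "\<lambda>W. W \<lhd> G \<and> M \<subset> W" "carrier G" card] normal_self Msub False
      by blast
    have M'sub: "M' \<subseteq> carrier G" using normal_imp_subgroup[OF M'(1)] subgroup.subset by blast
    then have "finite M'" using fin finite_subset by blast
    then have minimal: "W = M'" if "W \<lhd> G" "M \<subset> W" "W \<subseteq> M'" for W
      using least[OF that(1,2)] that(3) card_seteq by blast
    have "card M < card M'" using M'(2) \<open>finite M'\<close> psubset_card_mono by blast
    moreover have "card M' \<le> card (carrier G)" using M'sub fin card_mono by blast
    ultimately have "P M'" using less.hyps[OF _ M'(1)] by simp
    then show ?thesis using step[OF less.prems M' minimal] by blast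
  qed
qed

lemma minimal_normal_subset:
  assumes K: "K \<lhd> G" and M': "M' \<lhd> G" and "M \<subseteq> K" "M \<subseteq> M'"
    and minimal: "\<And>W. W \<lhd> G \<Longrightarrow> M \<subset> W \<Longrightarrow> W \<subseteq> M' \<Longrightarrow> W = M'"
    and x: "x \<in> K" "x \<in> M'" "x \<notin> M"
  shows "M' \<subseteq> K"
proof -
  have "K \<inter> M' = M'"
    using minimal[OF normal_subgroup_intersect[OF K M']] assms(3,4) x by blast
  then show ?thesis by blast
qed

lemma commutator_mem_normal_cancel_left:
  assumes M: "M \<lhd> G" and c: "x \<in> carrier G" "m \<in> carrier G" "w \<in> carrier G"
    and xw: "x \<otimes> w \<otimes> inv x \<otimes> inv w \<in> M"
    and xmw: "x \<otimes> m \<otimes> w \<otimes> inv (x \<otimes> m) \<otimes> inv w \<in> M"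
  shows "m \<otimes> w \<otimes> inv m \<otimes> inv w \<in> M"
proof -
  interpret M: normal M G by (rule M)
  let ?c = "m \<otimes> w \<otimes> inv m \<otimes> inv w"
  have cc: "?c \<in> carrier G" using c by simp
  have "x \<otimes> ?c \<otimes> inv x \<otimes> (x \<otimes> w \<otimes> inv x \<otimes> inv w) \<in> M"
    using commutator_mult_left[OF c] xmw by simp
  then have "x \<otimes> ?c \<otimes> inv x \<otimes> (x \<otimes> w \<otimes> inv x \<otimes> inv w) \<otimes> inv (x \<otimes> w \<otimes> inv x \<otimes> inv w) \<in> M"
    using M.m_closed[OF _ M.m_inv_closed[OF xw]] by blast
  moreover have "a \<otimes> b \<otimes> inv b = a" if "a \<in> carrier G" "b \<in> carrier G" for a b
    using that by (simp add: m_assoc)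
  ultimately have "x \<otimes> ?c \<otimes> inv x \<in> M"
    using c cc by simp
  then have "inv x \<otimes> (x \<otimes> ?c \<otimes> inv x) \<otimes> x \<in> M"
    by (rule M.inv_op_closed1[OF c(1)])
  then show ?thesis using c cc by (simp add: m_assoc inv_mult_cancel_left)
qed

lemma normal_generators_mod_mult:
  assumes gen: "normal_generators_mod G r z N" and i: "i < r" and m: "m \<in> carrier G"
    and N': "N' \<subseteq> carrier G"
    and m_mem: "m \<in> normal_closure G (z(i := z i \<otimes> m) ` {..<r} \<union> N')"
    and N_mem: "N \<subseteq> normal_closure G (z(i := z i \<otimes> m) ` {..<r} \<union> N')"
  shows "normal_generators_mod G r (z(i := z i \<otimes> m)) N'"
proof -
  let ?z' = "z(i := z i \<otimes> m)" and ?K = "normal_closure G (z(i := z i \<otimes> m) ` {..<r} \<union> N')"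
  have zc: "z \<in> {..<r} \<rightarrow> carrier G" using gen unfolding normal_generators_mod_def by blast
  then have z'c: "?z' \<in> {..<r} \<rightarrow> carrier G" using i m by (auto simp: Pi_iff)
  then have sub: "?z' ` {..<r} \<union> N' \<subseteq> carrier G" using N' by blast
  interpret K: subgroup ?K G by (rule normal_imp_subgroup[OF normal_closure_normal[OF sub]])
  have z'K: "?z' j \<in> ?K" if "j < r" for j
    using normal_closure_superset[OF sub] that by blast
  have "z j \<in> ?K" if j: "j < r" for j
  proof (cases "j = i")
    case True
    have "z i \<otimes> m \<in> ?K" using z'K[OF i] by simp
    from K.m_closed[OF this K.m_inv_closed[OF m_mem]]
    show ?thesis using True zc i m by (simp add: m_assoc Pi_iff)
  next
    case False
    then show ?thesis using z'K[OF j] by simp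
  qed
  then have "z ` {..<r} \<union> N \<subseteq> ?K" using N_mem by blast
  moreover have "normal_closure G (z ` {..<r} \<union> N) = carrier G"
    using gen unfolding normal_generators_mod_def by blast
  ultimately have "normal_closure G (?z' ` {..<r} \<union> N') = carrier G"
    using normal_closure_eq_carrier_trans[OF _ sub] by blast
  with z'c show ?thesis
    unfolding normal_generators_mod_def by blast
qed

lemma normal_generators_mod_descend_abelian:
  assumes M: "M \<lhd> G" and M': "M' \<lhd> G" and N0M: "N0 \<subseteq> M"
    and inv: "normal_generators_mod G r z (derived G (carrier G) \<union> N0)"
    and top: "normal_generators_mod G r z M'"
    and abelian: "\<And>a b. a \<in> M' \<Longrightarrow> b \<in> M' \<Longrightarrow> a \<otimes> b \<otimes> inv a \<otimes> inv b \<in> M"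
  shows "normal_generators_mod G r z M"
proof -
  have zc: "z \<in> {..<r} \<rightarrow> carrier G" using top unfolding normal_generators_mod_def by blast
  have sub: "z ` {..<r} \<union> M \<subseteq> carrier G"
    using zc normal_imp_subgroup[OF M] subgroup.subset by blast
  let ?K = "normal_closure G (z ` {..<r} \<union> M)"
  have K: "?K \<lhd> G" by (rule normal_closure_normal[OF sub])
  have zMK: "z ` {..<r} \<union> M \<subseteq> ?K" by (rule normal_closure_superset[OF sub])
  have "generate G (conj_closure G (z ` {..<r}) \<union> M') = carrier G"
    using top normal_closure_Un_normal[OF M'] unfolding normal_generators_mod_def by simp
  moreover have "conj_closure G (z ` {..<r}) \<subseteq> ?K"
    using conj_closure_subset_normal[OF K] zMK by blast
  moreover have "M' \<subseteq> carrier G" using normal_imp_subgroup[OF M'] subgroup.subset by blast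
  moreover have "a \<otimes> b \<otimes> inv a \<otimes> inv b \<in> ?K" if "a \<in> M'" "b \<in> M'" for a b
    using abelian[OF that] zMK by blast
  ultimately have "derived G (carrier G) \<subseteq> ?K"
    by (rule derived_subset_normal_if_generated[OF K])
  then have "z ` {..<r} \<union> (derived G (carrier G) \<union> N0) \<subseteq> ?K"
    using zMK N0M by blast
  moreover have "normal_closure G (z ` {..<r} \<union> (derived G (carrier G) \<union> N0)) = carrier G"
    using inv unfolding normal_generators_mod_def by blast
  ultimately show ?thesis
    using normal_closure_eq_carrier_trans[OF _ sub] zc unfolding normal_generators_mod_def by blast
qed

lemma minimal_normal_noncentral_commutator:
  assumes M: "M \<lhd> G" and M': "M' \<lhd> G" and MM': "M \<subset> M'"
    and minimal: "\<And>W. W \<lhd> G \<Longrightarrow> M \<subset> W \<Longrightarrow> W \<subseteq> M' \<Longrightarrow> W = M'"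
    and ab: "a \<in> M'" "b \<in> M'" "a \<otimes> b \<otimes> inv a \<otimes> inv b \<notin> M"
  shows "\<exists>m' \<in> M'. (a \<otimes> b \<otimes> inv a \<otimes> inv b) \<otimes> m' \<otimes> inv (a \<otimes> b \<otimes> inv a \<otimes> inv b) \<otimes> inv m' \<notin> M"
proof -
  interpret M: normal M G by (rule M)
  interpret M': normal M' G by (rule M')
  let ?m = "a \<otimes> b \<otimes> inv a \<otimes> inv b" and ?W = "centralizer_mod G M M' \<inter> M'"
  have W: "?W \<lhd> G"
    by (rule normal_subgroup_intersect[OF centralizer_mod_normal[OF M M'] M'])
  have "x \<in> centralizer_mod G M M'" if x: "x \<in> M" for x
    unfolding centralizer_mod_def using commutator_mem_normal_left[OF M x] x by auto
  then have "M \<subseteq> ?W" using MM' by blast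
  have "a \<notin> ?W" using ab unfolding centralizer_mod_def by auto
  have "?W = M"
  proof (rule ccontr)
    assume "?W \<noteq> M"
    with \<open>M \<subseteq> ?W\<close> have "M \<subset> ?W" by blast
    then have "?W = M'" using minimal[OF W] by blast
    with ab(1) \<open>a \<notin> ?W\<close> show False by blast
  qed
  have "?m \<in> M'" by (rule commutator_mem_normal_left[OF M' ab(1) M'.mem_carrier[OF ab(2)]])
  with ab(3) \<open>?W = M\<close> have "?m \<notin> centralizer_mod G M M'" by blast
  then show ?thesis unfolding centralizer_mod_def using ab by auto
qed

lemma normal_closure_inter_minimal_subset:
  assumes M: "M \<lhd> G" and M': "M' \<lhd> G" and MM': "M \<subset> M'"
    and minimal: "\<And>W. W \<lhd> G \<Longrightarrow> M \<subset> W \<Longrightarrow> W \<subseteq> M' \<Longrightarrow> W = M'"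
    and A: "A \<subseteq> carrier G" and top: "normal_closure G (A \<union> M') = carrier G"
    and proper: "normal_closure G (A \<union> M) \<noteq> carrier G"
  shows "normal_closure G (A \<union> M) \<inter> M' \<subseteq> M"
proof
  let ?K = "normal_closure G (A \<union> M)"
  have sub: "A \<union> M \<subseteq> carrier G" using A normal_imp_subgroup[OF M] subgroup.subset by blast
  have K: "?K \<lhd> G" by (rule normal_closure_normal[OF sub])
  have AMK: "A \<union> M \<subseteq> ?K" by (rule normal_closure_superset[OF sub])
  fix x assume x: "x \<in> ?K \<inter> M'"
  show "x \<in> M"
  proof (rule ccontr)
    assume "x \<notin> M"
    with minimal_normal_subset[OF K M' _ _ minimal] x AMK MM' have "A \<union> M' \<subseteq> ?K" by blast
    with top have "?K = carrier G" by (rule normal_closure_eq_carrier_trans[OF _ sub])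
    with proper show False ..
  qed
qed

lemma normal_generators_mod_mult_noncentral:
  assumes M: "M \<lhd> G" and M': "M' \<lhd> G" and MM': "M \<subset> M'"
    and minimal: "\<And>W. W \<lhd> G \<Longrightarrow> M \<subset> W \<Longrightarrow> W \<subseteq> M' \<Longrightarrow> W = M'"
    and top: "normal_generators_mod G r z M'" and i: "i < r"
    and meet: "normal_closure G (z ` {..<r} \<union> M) \<inter> M' \<subseteq> M"
    and m: "m \<in> M'" and m': "m' \<in> M'" and noncentral: "m \<otimes> m' \<otimes> inv m \<otimes> inv m' \<notin> M"
  shows "normal_generators_mod G r (z(i := z i \<otimes> m)) M"
proof -
  interpret M: normal M G by (rule M)
  interpret M': normal M' G by (rule M')
  have zc: "z \<in> {..<r} \<rightarrow> carrier G" using top unfolding normal_generators_mod_def by blast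
  have zi: "z i \<in> carrier G" using zc i by (auto simp: Pi_iff)
  have mc: "m \<in> carrier G" and m'c: "m' \<in> carrier G" using m m' by auto
  let ?z' = "z(i := z i \<otimes> m)"
  have sub: "z ` {..<r} \<union> M \<subseteq> carrier G" using zc M.subset by auto
  have sub': "?z' ` {..<r} \<union> M \<subseteq> carrier G" using zc zi mc M.subset by (auto simp: Pi_iff)
  let ?K = "normal_closure G (z ` {..<r} \<union> M)" and ?K' = "normal_closure G (?z' ` {..<r} \<union> M)"
  have K: "?K \<lhd> G" by (rule normal_closure_normal[OF sub])
  have K': "?K' \<lhd> G" by (rule normal_closure_normal[OF sub'])
  have zMK': "?z' ` {..<r} \<union> M \<subseteq> ?K'" by (rule normal_closure_superset[OF sub'])
  let ?c = "z i \<otimes> m \<otimes> m' \<otimes> inv (z i \<otimes> m) \<otimes> inv m'"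
  have "z i \<otimes> m \<in> ?K'" using zMK' i by force
  then have "?c \<in> ?K'" by (rule commutator_mem_normal_left[OF K' _ m'c])
  moreover have "?c \<in> M'" using commutator_mem_normal_right[OF M' _ m'] zi mc by simp
  moreover have "?c \<notin> M"
  proof
    assume "?c \<in> M"
    moreover have "z i \<otimes> m' \<otimes> inv (z i) \<otimes> inv m' \<in> ?K"
      using normal_closure_superset[OF sub] i by (intro commutator_mem_normal_left[OF K _ m'c]) auto
    with meet commutator_mem_normal_right[OF M' zi m']
    have "z i \<otimes> m' \<otimes> inv (z i) \<otimes> inv m' \<in> M" by blast
    ultimately have "m \<otimes> m' \<otimes> inv m \<otimes> inv m' \<in> M"
      by (intro commutator_mem_normal_cancel_left[OF M zi mc m'c])
    with noncentral show False ..
  qed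
  ultimately have "M' \<subseteq> ?K'"
    using minimal_normal_subset[OF K' M' _ _ minimal] zMK' MM' by blast
  with m show ?thesis
    by (intro normal_generators_mod_mult[OF top i mc M.subset]) blast+
qed

lemma normal_generators_mod_descend:
  assumes r: "0 < r" and M: "M \<lhd> G" and M': "M' \<lhd> G" and N0M: "N0 \<subseteq> M" and MM': "M \<subset> M'"
    and minimal: "\<And>W. W \<lhd> G \<Longrightarrow> M \<subset> W \<Longrightarrow> W \<subseteq> M' \<Longrightarrow> W = M'"
    and inv: "normal_generators_mod G r z (derived G (carrier G) \<union> N0)"
    and top: "normal_generators_mod G r z M'"
  shows "\<exists>z'. normal_generators_mod G r z' (derived G (carrier G) \<union> N0)
    \<and> normal_generators_mod G r z' M"
proof (cases "normal_generators_mod G r z M")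
  case True
  with inv show ?thesis by blast
next
  case False
  interpret M: normal M G by (rule M)
  interpret M': normal M' G by (rule M')
  have zc: "z \<in> {..<r} \<rightarrow> carrier G" and top_gen: "normal_closure G (z ` {..<r} \<union> M') = carrier G"
    using top unfolding normal_generators_mod_def by blast+
  with False have "normal_closure G (z ` {..<r} \<union> M) \<noteq> carrier G"
    unfolding normal_generators_mod_def by blast
  with zc top_gen have meet: "normal_closure G (z ` {..<r} \<union> M) \<inter> M' \<subseteq> M"
    by (intro normal_closure_inter_minimal_subset[OF M M' MM' minimal]) auto
  obtain a b where ab: "a \<in> M'" "b \<in> M'" "a \<otimes> b \<otimes> inv a \<otimes> inv b \<notin> M"
    using normal_generators_mod_descend_abelian[OF M M' N0M inv top] False by blast
  define m where "m = a \<otimes> b \<otimes> inv a \<otimes> inv b"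
  obtain m' where m': "m' \<in> M'" "m \<otimes> m' \<otimes> inv m \<otimes> inv m' \<notin> M"
    using minimal_normal_noncentral_commutator[OF M M' MM' minimal ab] unfolding m_def by blast
  have abc: "a \<in> carrier G" "b \<in> carrier G" using ab by auto
  then have mc: "m \<in> carrier G" unfolding m_def by simp
  have mM': "m \<in> M'" unfolding m_def by (rule commutator_mem_normal_left[OF M' ab(1) abc(2)])
  have mD: "m \<in> derived G (carrier G)"
    unfolding m_def derived_def using abc by (intro generate.incl) blast
  let ?z' = "z(0 := z 0 \<otimes> m)"
  have DN0: "derived G (carrier G) \<union> N0 \<subseteq> carrier G"
    using derived_in_carrier[OF order_refl] N0M M.subset by blast
  have "?z' \<in> {..<r} \<rightarrow> carrier G" using zc r mc by (auto simp: Pi_iff)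
  with DN0 have "derived G (carrier G) \<union> N0
      \<subseteq> normal_closure G (?z' ` {..<r} \<union> (derived G (carrier G) \<union> N0))"
    using normal_closure_superset[of "?z' ` {..<r} \<union> (derived G (carrier G) \<union> N0)"] by blast
  with mD have "normal_generators_mod G r ?z' (derived G (carrier G) \<union> N0)"
    by (intro normal_generators_mod_mult[OF inv r mc DN0]) blast+
  moreover have "normal_generators_mod G r ?z' M"
    by (rule normal_generators_mod_mult_noncentral[OF M M' MM' minimal top r meet mM' m'])
  ultimately show ?thesis by blast
qed

lemma normal_generators_mod_carrier:
  "z \<in> {..<r} \<rightarrow> carrier G \<Longrightarrow> normal_generators_mod G r z (carrier G)"
  unfolding normal_generators_mod_def
  using normal_closure_superset[of "z ` {..<r} \<union> carrier G"]
    normal_closure_subset_carrier[of "z ` {..<r} \<union> carrier G"] by blast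

lemma normal_generators_mod_remove_derived:
  assumes fin: "finite (carrier G)" and r: "0 < r" and N0: "N0 \<lhd> G"
    and gen: "normal_generators_mod G r y (derived G (carrier G) \<union> N0)"
  shows "\<exists>z. normal_generators_mod G r z N0"
proof -
  have "N0 \<subseteq> M \<longrightarrow> (\<exists>z. normal_generators_mod G r z (derived G (carrier G) \<union> N0)
          \<and> normal_generators_mod G r z M)" if "M \<lhd> G" for M
    using fin that
  proof (induction M rule: normal_subgroup_minimal_induct)
    case carrier
    have "y \<in> {..<r} \<rightarrow> carrier G" using gen unfolding normal_generators_mod_def by blast
    with gen show ?case using normal_generators_mod_carrier by blast
  next
    case (step M M')
    then show ?case using normal_generators_mod_descend[OF r step.hyps(1,2) _ step.hyps(3,4)] by blast
  qed
  then show ?thesis using N0 by blast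
qed

end

section \<open>Sylow subgroups and the Frattini argument\<close>

lemma (in group_action) fixed_point_if_not_dvd_card:
  assumes E: "finite E" and p: "Factorial_Ring.prime p" and G: "order G = p ^ j"
    and nd: "\<not> p dvd card E"
  shows "\<exists>x\<in>E. \<forall>g\<in>carrier G. \<phi> g x = x"
proof (rule ccontr)
  assume nofix: "\<not> (\<exists>x\<in>E. \<forall>g\<in>carrier G. \<phi> g x = x)"
  have "p dvd card orb" if orb: "orb \<in> orbits G E \<phi>" for orb
  proof -
    obtain x where x: "x \<in> E" "orb = orbit G \<phi> x" using orb unfolding orbits_def by blast
    have "card orb dvd p ^ j"
      using orbit_stabilizer_theorem[OF x(1)] x(2) G by (metis dvd_triv_left)
    then obtain i where i: "card orb = p ^ i" using divides_primepow_nat[OF p] by blast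
    have "i \<noteq> 0"
    proof
      assume "i = 0"
      with i have "card orb = 1" by simp
      moreover have "x \<in> orb" using orbit_refl[OF x(1)] x(2) by simp
      ultimately have "orb = {x}" by (metis card_1_singletonE singletonD)
      then have "\<phi> g x = x" if "g \<in> carrier G" for g
        using that x(2) unfolding orbit_def by blast
      with nofix x(1) show False by blast
    qed
    with i show ?thesis by (simp add: dvd_power)
  qed
  then have "p dvd (\<Sum>orb\<in>orbits G E \<phi>. card orb)" by (simp add: dvd_sum)
  moreover have "(\<Sum>orb\<in>orbits G E \<phi>. card orb) = card E"
    using disjoint_sum[OF E, of "\<lambda>_. 1"] by (simp only: card_eq_sum)
  ultimately show False using nd by simp
qed

context group
begin

lemma rcosets_right_action:
  assumes S: "subgroup S G"
  shows "group_action G (rcosets S) (\<lambda>g. \<lambda>U \<in> rcosets S. U #> inv g)"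
proof -
  let ?E = "rcosets S" and ?\<phi> = "\<lambda>g. \<lambda>U \<in> rcosets S. U #> inv g"
  have Ssub: "S \<subseteq> carrier G" by (rule subgroup.subset[OF S])
  have Esub: "U \<subseteq> carrier G" if "U \<in> ?E" for U
    using subgroup.rcosets_carrier[OF S is_group that] .
  have closed: "U #> g \<in> ?E" if "U \<in> ?E" "g \<in> carrier G" for U g
  proof -
    from that(1) obtain x where x: "x \<in> carrier G" "U = S #> x"
      unfolding RCOSETS_def by (rule UN_E) simp
    then have "U #> g = S #> (x \<otimes> g)" using coset_mult_assoc[OF Ssub x(1) that(2)] by simp
    then show ?thesis using rcosetsI[OF Ssub m_closed[OF x(1) that(2)]] by simp
  qed
  have bij: "?\<phi> g \<in> Bij ?E" if g: "g \<in> carrier G" for g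
  proof -
    have "bij_betw (?\<phi> g) ?E ?E"
    proof (rule bij_betwI[where g = "\<lambda>U. U #> g"])
      show "?\<phi> g \<in> ?E \<rightarrow> ?E" using closed[OF _ inv_closed[OF g]] by simp
      show "(\<lambda>U. U #> g) \<in> ?E \<rightarrow> ?E" using closed[OF _ g] by simp
      show "?\<phi> g U #> g = U" if "U \<in> ?E" for U
        using that g Esub[OF that] by (simp add: coset_mult_assoc)
      show "?\<phi> g (U #> g) = U" if "U \<in> ?E" for U
        using that g closed[OF that g] Esub[OF that] by (simp add: coset_mult_assoc)
    qed
    then show ?thesis unfolding Bij_def by simp
  qed
  have hom: "?\<phi> (g \<otimes> h) = compose ?E (?\<phi> g) (?\<phi> h)"
    if gh: "g \<in> carrier G" "h \<in> carrier G" for g h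
  proof
    fix U show "?\<phi> (g \<otimes> h) U = compose ?E (?\<phi> g) (?\<phi> h) U"
    proof (cases "U \<in> ?E")
      case True
      have "U #> inv (g \<otimes> h) = (U #> inv h) #> inv g"
        using gh Esub[OF True] by (simp add: inv_mult_group coset_mult_assoc)
      then show ?thesis unfolding compose_def using True closed[OF True inv_closed[OF gh(2)]] by simp
    qed (simp add: compose_def)
  qed
  have "?\<phi> \<in> hom G (BijGroup ?E)"
  proof (rule homI)
    show "?\<phi> g \<in> carrier (BijGroup ?E)" if "g \<in> carrier G" for g
      using bij[OF that] unfolding BijGroup_def by simp
    show "?\<phi> (g \<otimes> h) = ?\<phi> g \<otimes>\<^bsub>BijGroup ?E\<^esub> ?\<phi> h" if "g \<in> carrier G" "h \<in> carrier G" for g h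
      using hom[OF that] bij that unfolding BijGroup_def by simp
  qed
  then show ?thesis
    unfolding group_action_def
    by (intro group_hom.intro group_hom_axioms.intro is_group group_BijGroup)
qed

lemma p_subgroup_conj_subset:
  assumes fin: "finite (carrier G)" and p: "Factorial_Ring.prime p"
    and S: "subgroup S G" and T: "subgroup T G" and cT: "card T = p ^ j"
    and nd: "\<not> p dvd card (rcosets S)"
  shows "\<exists>g\<in>carrier G. \<forall>t\<in>T. inv g \<otimes> t \<otimes> g \<in> S"
proof -
  interpret T: group_action "G\<lparr>carrier := T\<rparr>" "rcosets S" "\<lambda>g. \<lambda>U \<in> rcosets S. U #> inv g"
    using group_action.induced_action[OF rcosets_right_action[OF S] T] .
  have E: "finite (rcosets S)"
    using fin rcosets_subset_PowG[OF S] by (meson finite_Pow_iff finite_subset)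
  have T_order: "order (G\<lparr>carrier := T\<rparr>) = p ^ j" using cT unfolding order_def by simp
  obtain U where U: "U \<in> rcosets S" "\<forall>t\<in>T. U #> inv t = U"
    using T.fixed_point_if_not_dvd_card[OF E p T_order nd] by auto
  from U(1) obtain x where x: "x \<in> carrier G" "U = S #> x"
    unfolding RCOSETS_def by (rule UN_E) simp
  have "x \<otimes> t \<otimes> inv x \<in> S" if t: "t \<in> T" for t
  proof -
    have tc: "t \<in> carrier G" using subgroup.mem_carrier[OF T t] .
    have "S #> x #> inv t = S #> x" using U(2) t x(2) by simp
    then have "S #> (x \<otimes> inv t) = S #> x"
      using coset_mult_assoc[OF subgroup.subset[OF S] x(1) inv_closed[OF tc]] by simp
    then have "x \<otimes> inv t \<in> S #> x" using rcos_self[OF _ S] x tc by (metis inv_closed m_closed)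
    then have "x \<otimes> inv t \<otimes> inv x \<in> S" using subgroup.rcos_module_imp[OF S is_group x(1)] by simp
    then have "inv (x \<otimes> inv t \<otimes> inv x) \<in> S" by (rule subgroup.m_inv_closed[OF S])
    then show ?thesis using x tc by (simp add: inv_mult_group m_assoc)
  qed
  then show ?thesis using x by (intro bexI[of _ "inv x"]) auto
qed

lemma conj_group_hom: "g \<in> carrier G \<Longrightarrow> group_hom G G (\<lambda>x. g \<otimes> x \<otimes> inv g)"
  by (intro group_hom.intro group_hom_axioms.intro is_group homI)
    (simp_all add: m_assoc inv_mult_cancel_left)

lemma card_conj_image:
  "S \<subseteq> carrier G \<Longrightarrow> g \<in> carrier G \<Longrightarrow> card ((\<lambda>x. g \<otimes> x \<otimes> inv g) ` S) = card S"
  by (intro card_image inj_onI) (auto dest: conjugation_is_inj)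

lemma normalizer_iff:
  assumes "S \<subseteq> carrier G"
  shows "a \<in> normalizer G S \<longleftrightarrow> a \<in> carrier G \<and> (\<lambda>s. a \<otimes> s \<otimes> inv a) ` S = S"
proof -
  have "a <# S #> inv a = (\<lambda>s. a \<otimes> s \<otimes> inv a) ` S"
    unfolding l_coset_def r_coset_def by auto
  then show ?thesis
    using assms unfolding normalizer_def stabilizer_def by auto
qed

lemma sylow_subgroup_conj:
  assumes "sylow_subgroup G p S" "g \<in> carrier G"
  shows "sylow_subgroup G p ((\<lambda>x. g \<otimes> x \<otimes> inv g) ` S)"
  using assms group_hom.subgroup_img_is_subgroup[OF conj_group_hom] card_conj_image subgroup.subset
  unfolding sylow_subgroup_def by metis

lemma sylow_subgroup_exists:
  assumes "finite (carrier G)" "Factorial_Ring.prime p"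
  shows "\<exists>S. sylow_subgroup G p S"
proof -
  have "order G = p ^ multiplicity p (order G) * (order G div p ^ multiplicity p (order G))"
    using multiplicity_dvd[of p "order G"] by simp
  then show ?thesis
    using sylow.sylow_thm[of G p] assms is_group unfolding sylow_def sylow_axioms_def sylow_subgroup_def
    by blast
qed

lemma sylow_gen_normal: "sylow_gen G p \<lhd> G"
  unfolding sylow_gen_def
proof (rule normal_generateI)
  show "\<Union> {P. sylow_subgroup G p P} \<subseteq> carrier G"
    unfolding sylow_subgroup_def using subgroup.subset by blast
  fix h g assume h: "h \<in> \<Union> {P. sylow_subgroup G p P}" and g: "g \<in> carrier G"
  then obtain P where P: "sylow_subgroup G p P" "h \<in> P" by blast
  then have "g \<otimes> h \<otimes> inv g \<in> (\<lambda>x. g \<otimes> x \<otimes> inv g) ` P" by blast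
  with sylow_subgroup_conj[OF P(1) g] show "g \<otimes> h \<otimes> inv g \<in> \<Union> {P. sylow_subgroup G p P}"
    by blast
qed

lemma sylow_subset_sylow_gen: "sylow_subgroup G p S \<Longrightarrow> S \<subseteq> sylow_gen G p"
  unfolding sylow_gen_def by (auto intro: generate.incl)

lemma sylow_index_not_dvd:
  assumes fin: "finite (carrier G)" and p: "Factorial_Ring.prime p"
    and H: "subgroup H G" and S: "sylow_subgroup G p S" and SH: "S \<subseteq> H"
  shows "\<not> p dvd card (rcosets\<^bsub>G\<lparr>carrier := H\<rparr>\<^esub> S)"
proof
  assume dvd: "p dvd card (rcosets\<^bsub>G\<lparr>carrier := H\<rparr>\<^esub> S)"
  let ?q = "p ^ multiplicity p (order G)"
  have "order G \<noteq> 0" using fin order_gt_0_iff_finite by simp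
  moreover have "\<not> is_unit p" using p not_prime_unit by blast
  ultimately obtain m where m: "order G = ?q * m" "\<not> p dvd m"
    using multiplicity_decompose' by blast
  have Ss: "subgroup S G" and cS: "card S = ?q" using S unfolding sylow_subgroup_def by auto
  have "card (rcosets\<^bsub>G\<lparr>carrier := H\<rparr>\<^esub> S) * ?q = card H"
    using group.lagrange[OF subgroup_imp_group[OF H] subgroup_incl[OF Ss H SH]] cS
    unfolding order_def by simp
  then have "card (rcosets\<^bsub>G\<lparr>carrier := H\<rparr>\<^esub> S) * card (rcosets H) * ?q = ?q * m"
    using lagrange[OF H] m(1) by (metis mult.assoc mult.commute)
  then have "card (rcosets\<^bsub>G\<lparr>carrier := H\<rparr>\<^esub> S) * card (rcosets H) = m"
    using p prime_gt_0_nat by simp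
  with dvd m(2) show False by (metis dvd_mult2)
qed

lemma sylow_subset_conj_closure:
  assumes fin: "finite (carrier G)" and p: "Factorial_Ring.prime p"
    and S: "sylow_subgroup G p S" and P: "sylow_subgroup G p P"
  shows "P \<subseteq> conj_closure G S"
proof
  have Ss: "subgroup S G" and Ps: "subgroup P G" using S P unfolding sylow_subgroup_def by auto
  have "\<not> p dvd card (rcosets S)"
    using sylow_index_not_dvd[OF fin p subgroup_self S subgroup.subset[OF Ss]] by simp
  then obtain g where g: "g \<in> carrier G" "\<forall>t\<in>P. inv g \<otimes> t \<otimes> g \<in> S"
    using p_subgroup_conj_subset[OF fin p Ss Ps] P unfolding sylow_subgroup_def by blast
  fix t assume t: "t \<in> P"
  then have "t = g \<otimes> (inv g \<otimes> t \<otimes> g) \<otimes> inv g"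
    using g(1) subgroup.mem_carrier[OF Ps t] by (simp add: m_assoc mult_inv_cancel_left)
  with g t show "t \<in> conj_closure G S" unfolding conj_closure_def by blast
qed

lemma sylow_gen_subset_normal_closure:
  assumes fin: "finite (carrier G)" and p: "Factorial_Ring.prime p"
    and S: "sylow_subgroup G p S"
  shows "sylow_gen G p \<subseteq> normal_closure G S"
proof -
  have Ssub: "S \<subseteq> carrier G" using S subgroup.subset unfolding sylow_subgroup_def by blast
  have "conj_closure G S \<subseteq> normal_closure G S"
    unfolding normal_closure_def by (rule subsetI, rule generate.incl)
  with sylow_subset_conj_closure[OF fin p S]
  have "\<Union> {P. sylow_subgroup G p P} \<subseteq> normal_closure G S" by blast
  then show ?thesis unfolding sylow_gen_def
    by (rule generate_subgroup_incl[OF _ normal_imp_subgroup[OF normal_closure_normal[OF Ssub]]])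
qed

lemma frattini_sylow:
  assumes fin: "finite (carrier G)" and p: "Factorial_Ring.prime p"
    and S: "sylow_subgroup G p S" and z: "z \<in> carrier G"
  shows "\<exists>n \<in> sylow_gen G p. \<exists>a \<in> normalizer G S. z = n \<otimes> a"
proof -
  let ?N = "sylow_gen G p" and ?T = "(\<lambda>x. z \<otimes> x \<otimes> inv z) ` S"
  interpret N: normal ?N G by (rule sylow_gen_normal)
  interpret H: group "G\<lparr>carrier := ?N\<rparr>" by (rule subgroup_imp_group[OF N.subgroup_axioms])
  have Ss: "subgroup S G" using S unfolding sylow_subgroup_def by blast
  have Ssub: "S \<subseteq> carrier G" by (rule subgroup.subset[OF Ss])
  have T: "sylow_subgroup G p ?T" by (rule sylow_subgroup_conj[OF S z])
  have finN: "finite (carrier (G\<lparr>carrier := ?N\<rparr>))" using fin N.subset finite_subset by auto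
  have SH: "subgroup S (G\<lparr>carrier := ?N\<rparr>)"
    using subgroup_incl[OF Ss N.subgroup_axioms sylow_subset_sylow_gen[OF S]] .
  have TH: "subgroup ?T (G\<lparr>carrier := ?N\<rparr>)"
    using subgroup_incl[OF _ N.subgroup_axioms sylow_subset_sylow_gen[OF T]] T
    unfolding sylow_subgroup_def by blast
  have cT: "card ?T = p ^ multiplicity p (order G)"
    using T unfolding sylow_subgroup_def by blast
  have nd: "\<not> p dvd card (rcosets\<^bsub>G\<lparr>carrier := ?N\<rparr>\<^esub> S)"
    by (rule sylow_index_not_dvd[OF fin p N.subgroup_axioms S sylow_subset_sylow_gen[OF S]])
  from H.p_subgroup_conj_subset[OF finN p SH TH cT nd]
  obtain n where n: "n \<in> ?N" "\<forall>t\<in>?T. inv\<^bsub>G\<lparr>carrier := ?N\<rparr>\<^esub> n \<otimes> t \<otimes> n \<in> S"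
    by auto
  have nc: "n \<in> carrier G" by (rule N.mem_carrier[OF n(1)])
  define a where "a = inv n \<otimes> z"
  have ac: "a \<in> carrier G" unfolding a_def using nc z by simp
  have "z = n \<otimes> a" unfolding a_def using nc z by (simp add: mult_inv_cancel_left)
  have "(\<lambda>s. a \<otimes> s \<otimes> inv a) ` S \<subseteq> S"
  proof
    fix x assume "x \<in> (\<lambda>s. a \<otimes> s \<otimes> inv a) ` S"
    then obtain s where s: "s \<in> S" "x = a \<otimes> s \<otimes> inv a" by blast
    have "inv n \<otimes> (z \<otimes> s \<otimes> inv z) \<otimes> n \<in> S"
      using n(2) s(1) m_inv_consistent[OF N.subgroup_axioms n(1)] by simp
    moreover have "a \<otimes> s \<otimes> inv a = inv n \<otimes> (z \<otimes> s \<otimes> inv z) \<otimes> n"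
      unfolding a_def using nc z Ssub s(1) by (auto simp: m_assoc inv_mult_group)
    ultimately show "x \<in> S" using s(2) by simp
  qed
  then have "(\<lambda>s. a \<otimes> s \<otimes> inv a) ` S = S"
    using card_subset_eq[OF finite_subset[OF Ssub fin]] card_conj_image[OF Ssub ac] by blast
  then have "a \<in> normalizer G S" using normalizer_iff[OF Ssub] ac by blast
  with n(1) \<open>z = n \<otimes> a\<close> show ?thesis by blast
qed

end

section \<open>Lifting generators of the abelianization\<close>

lemma min_gens_attained:
  assumes "group H" and "finite (carrier H)"
  shows "\<exists>S. S \<subseteq> carrier H \<and> finite S \<and> card S = min_gens H \<and> generate H S = carrier H"
proof -
  have "generate H (carrier H) \<subseteq> carrier H" by (rule group.generate_incl[OF assms(1) order_refl])
  moreover have "carrier H \<subseteq> generate H (carrier H)" by (rule subsetI, rule generate.incl)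
  ultimately have "generate H (carrier H) = carrier H" by (rule antisym)
  then have "\<exists>n S. S \<subseteq> carrier H \<and> finite S \<and> card S = n \<and> generate H S = carrier H"
    using assms(2) by (intro exI[of _ "card (carrier H)"] exI[of _ "carrier H"]) simp
  then show ?thesis unfolding min_gens_def by (rule LeastI_ex)
qed

lemma (in group_hom) surj_lift_finite_subset:
  assumes surj: "h ` carrier G = carrier H" and S: "S \<subseteq> carrier H" "finite S"
  shows "\<exists>y. y \<in> UNIV \<rightarrow> carrier G \<and> h ` y ` {..<card S} = S"
proof -
  obtain e where e: "bij_betw e {..<card S} S"
    using ex_bij_betw_nat_finite[OF S(2)] unfolding atLeast0LessThan by blast
  have e_img: "e i \<in> h ` carrier G" if "i < card S" for i
    using bij_betwE[OF e] that S(1) unfolding surj[symmetric] by blast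
  define y where "y i = (if i < card S then inv_into (carrier G) h (e i) else \<one>)" for i
  have "y i \<in> carrier G" for i unfolding y_def using inv_into_into[OF e_img] by auto
  then have "y \<in> UNIV \<rightarrow> carrier G" by blast
  moreover have "h (y i) = e i" if "i < card S" for i
    unfolding y_def using f_inv_into_f[OF e_img[OF that]] that by simp
  then have "h ` y ` {..<card S} = e ` {..<card S}"
    unfolding image_image by (intro image_cong) simp_all
  ultimately show ?thesis using bij_betw_imp_surj_on[OF e] by (intro exI[of _ y]) simp
qed

lemma (in group_hom) eq_carrier_if_kernel_subset:
  assumes W: "subgroup W G" and ker: "kernel G H h \<subseteq> W" and img: "carrier H \<subseteq> h ` W"
  shows "W = carrier G"
proof
  show "W \<subseteq> carrier G" by (rule subgroup.subset[OF W])
  show "carrier G \<subseteq> W"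
  proof
    fix g assume g: "g \<in> carrier G"
    obtain w where w: "w \<in> W" "h g = h w" using img hom_closed[OF g] by blast
    have wc: "w \<in> carrier G" by (rule subgroup.mem_carrier[OF W w(1)])
    have "h (g \<otimes>\<^bsub>G\<^esub> inv\<^bsub>G\<^esub> w) = \<one>\<^bsub>H\<^esub>" using g wc w(2) by (simp add: hom_mult hom_inv)
    then have "g \<otimes>\<^bsub>G\<^esub> inv\<^bsub>G\<^esub> w \<in> W" using ker g wc unfolding kernel_def by auto
    from subgroup.m_closed[OF W this w(1)] have "g \<otimes>\<^bsub>G\<^esub> inv\<^bsub>G\<^esub> w \<otimes>\<^bsub>G\<^esub> w \<in> W" .
    then show "g \<in> W" using g wc by (simp add: G.m_assoc)
  qed
qed

context group
begin

lemma coset_mem_derived_Mod: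
  assumes N: "N \<lhd> G" and x: "x \<in> carrier G"
    and mem: "N #> x \<in> derived (G Mod N) (carrier (G Mod N))"
  shows "x \<in> generate G (derived G (carrier G) \<union> N)"
proof -
  interpret q: group_hom G "G Mod N" "\<lambda>a. N #> a"
    using normal.r_coset_hom_Mod[OF N] normal.factorgroup_is_group[OF N]
    by (intro group_hom.intro group_hom_axioms.intro is_group)
  have "derived (G Mod N) (carrier (G Mod N)) = (\<lambda>a. N #> a) ` derived G (carrier G)"
    using q.derived_img[of "carrier G"] carrier_FactGroup[of G N] by simp
  with mem obtain x' where x': "x' \<in> derived G (carrier G)" "N #> x = N #> x'" by auto
  have x'c: "x' \<in> carrier G" using x'(1) derived_in_carrier[OF order_refl] by blast
  have "x \<in> N #> x'" using x'(2) rcos_self[OF x normal_imp_subgroup[OF N]] by simp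
  then have "x \<otimes> inv x' \<in> N"
    using subgroup.rcos_module_imp[OF normal_imp_subgroup[OF N] is_group x'c] by simp
  then have "x \<otimes> inv x' \<otimes> x' \<in> generate G (derived G (carrier G) \<union> N)"
    using x'(1) generate.eng[OF generate.incl generate.incl, of _ "derived G (carrier G) \<union> N"]
    by blast
  then show ?thesis using x x'c by (simp add: m_assoc)
qed

lemma abelianization_map_exists:
  assumes N: "N \<lhd> G"
  shows "\<exists>\<psi>. group_hom G (abelianization (G Mod N)) \<psi>
    \<and> \<psi> ` carrier G = carrier (abelianization (G Mod N))
    \<and> kernel G (abelianization (G Mod N)) \<psi> \<subseteq> generate G (derived G (carrier G) \<union> N)"
proof -
  let ?Q = "G Mod N"
  let ?D = "derived ?Q (carrier ?Q)"
  interpret q: group_hom G ?Q "\<lambda>a. N #> a"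
    using normal.r_coset_hom_Mod[OF N] normal.factorgroup_is_group[OF N]
    by (intro group_hom.intro group_hom_axioms.intro is_group)
  have D: "?D \<lhd> ?Q" by (rule q.H.derived_self_is_normal)
  interpret ab: group_hom ?Q "?Q Mod ?D" "\<lambda>A. ?D #>\<^bsub>?Q\<^esub> A"
    using normal.r_coset_hom_Mod[OF D] normal.factorgroup_is_group[OF D]
    by (intro group_hom.intro group_hom_axioms.intro q.H.is_group)
  define \<psi> where "\<psi> a = ?D #>\<^bsub>?Q\<^esub> (N #> a)" for a
  have hom: "group_hom G (abelianization ?Q) \<psi>"
    unfolding abelianization_def
  proof (intro group_hom.intro group_hom_axioms.intro is_group ab.H.is_group homI)
    show "\<psi> x \<in> carrier (?Q Mod ?D)" if "x \<in> carrier G" for x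
      unfolding \<psi>_def using that by simp
    show "\<psi> (x \<otimes> y) = \<psi> x \<otimes>\<^bsub>?Q Mod ?D\<^esub> \<psi> y" if "x \<in> carrier G" "y \<in> carrier G" for x y
      unfolding \<psi>_def using that by (simp add: q.hom_mult ab.hom_mult del: mult_FactGroup)
  qed
  have surj: "\<psi> ` carrier G = carrier (abelianization ?Q)"
    unfolding abelianization_def \<psi>_def carrier_FactGroup[of ?Q] carrier_FactGroup[of G] by auto
  have "x \<in> generate G (derived G (carrier G) \<union> N)"
    if x: "x \<in> carrier G" "\<psi> x = \<one>\<^bsub>abelianization ?Q\<^esub>" for x
  proof (rule coset_mem_derived_Mod[OF N x(1)])
    have "?D #>\<^bsub>?Q\<^esub> (N #> x) = ?D"
      using x(2) unfolding \<psi>_def abelianization_def by simp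
    then show "N #> x \<in> ?D"
      using q.H.coset_join1 q.hom_closed[OF x(1)] normal_imp_subgroup[OF D] by blast
  qed
  then have "kernel G (abelianization ?Q) \<psi> \<subseteq> generate G (derived G (carrier G) \<union> N)"
    unfolding kernel_def by blast
  with hom surj show ?thesis by blast
qed

lemma normal_generators_mod_abelianization:
  assumes fin: "finite (carrier G)" and N: "N \<lhd> G"
  shows "\<exists>y. y \<in> UNIV \<rightarrow> carrier G
    \<and> normal_generators_mod G (min_gens (abelianization (G Mod N))) y (derived G (carrier G) \<union> N)"
proof -
  let ?Ab = "abelianization (G Mod N)" and ?D = "derived G (carrier G)"
  obtain \<psi> where \<psi>: "group_hom G ?Ab \<psi>" "\<psi> ` carrier G = carrier ?Ab"
    and ker: "kernel G ?Ab \<psi> \<subseteq> generate G (?D \<union> N)"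
    using abelianization_map_exists[OF N] by blast
  interpret \<psi>: group_hom G ?Ab \<psi> by (rule \<psi>(1))
  have "finite (carrier ?Ab)" using fin \<psi>(2) by (metis finite_imageI)
  then obtain S where S: "S \<subseteq> carrier ?Ab" "finite S" "card S = min_gens ?Ab" "generate ?Ab S = carrier ?Ab"
    using min_gens_attained[OF \<psi>.H.is_group] by blast
  obtain y where y: "y \<in> UNIV \<rightarrow> carrier G" "\<psi> ` y ` {..<card S} = S"
    using \<psi>.surj_lift_finite_subset[OF \<psi>(2) S(1,2)] by blast
  let ?A = "y ` {..<card S} \<union> (?D \<union> N)"
  have A: "?A \<subseteq> carrier G"
    using y(1) derived_in_carrier[OF order_refl] normal_imp_subgroup[OF N] subgroup.subset by blast
  have W: "subgroup (generate G ?A) G" by (rule generate_is_subgroup[OF A])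
  have "kernel G ?Ab \<psi> \<subseteq> generate G ?A"
    using ker mono_generate[of "?D \<union> N" ?A] by blast
  moreover have "carrier ?Ab \<subseteq> \<psi> ` generate G ?A"
  proof -
    have "S \<subseteq> \<psi> ` generate G ?A"
      using y(2) generate.incl[of _ ?A G] by blast
    then show ?thesis
      using \<psi>.H.generate_subgroup_incl[OF _ \<psi>.subgroup_img_is_subgroup[OF W]] S(4) by metis
  qed
  ultimately have "generate G ?A = carrier G" by (rule \<psi>.eq_carrier_if_kernel_subset[OF W])
  then have "normal_closure G ?A = carrier G"
    using generate_subset_normal_closure[OF A] normal_closure_subset_carrier[OF A] by blast
  with y(1) S(3) show ?thesis unfolding normal_generators_mod_def by (intro exI[of _ y]) auto
qed

lemma normal_generators_mod_mono:
  assumes gen: "normal_generators_mod G d y N" and "d \<le> r"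
    and y: "y \<in> {..<r} \<rightarrow> carrier G" and N: "N \<subseteq> carrier G"
  shows "normal_generators_mod G r y N"
proof -
  have "y ` {..<d} \<union> N \<subseteq> y ` {..<r} \<union> N" using \<open>d \<le> r\<close> by auto
  moreover have "y ` {..<r} \<union> N \<subseteq> carrier G" using y N by blast
  ultimately have "normal_closure G (y ` {..<r} \<union> N) = carrier G"
    using normal_closure_eq_carrier_trans gen normal_closure_superset
    unfolding normal_generators_mod_def by (meson subset_trans)
  with y show ?thesis unfolding normal_generators_mod_def by blast
qed

end

section \<open>Cyclic-by-\<open>p\<close> subgroups whose conjugates generate \<open>G\<close>\<close>

context group
begin

lemma p_group_subgroupI:
  "subgroup P G \<Longrightarrow> finite P \<Longrightarrow> card P = p ^ k \<Longrightarrow> p_group p (G\<lparr>carrier := P\<rparr>)"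
  unfolding p_group_def using subgroup_imp_group by auto

lemma subgroup_subset_normalizer:
  assumes P: "subgroup P G"
  shows "P \<subseteq> normalizer G P"
proof
  fix s assume s: "s \<in> P"
  have "(\<lambda>x. s \<otimes> x \<otimes> inv s) ` P = P"
  proof
    show "(\<lambda>x. s \<otimes> x \<otimes> inv s) ` P \<subseteq> P"
      using s subgroup.m_closed[OF P] subgroup.m_inv_closed[OF P] by blast
    show "P \<subseteq> (\<lambda>x. s \<otimes> x \<otimes> inv s) ` P"
    proof
      fix x assume x: "x \<in> P"
      have "inv s \<otimes> x \<otimes> s \<in> P"
        using s x subgroup.m_closed[OF P] subgroup.m_inv_closed[OF P] by blast
      moreover have "x = s \<otimes> (inv s \<otimes> x \<otimes> s) \<otimes> inv s"
        using s x subgroup.mem_carrier[OF P] by (simp add: m_assoc mult_inv_cancel_left)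
      ultimately show "x \<in> (\<lambda>x. s \<otimes> x \<otimes> inv s) ` P" by blast
    qed
  qed
  then show "s \<in> normalizer G P"
    using normalizer_iff[OF subgroup.subset[OF P]] subgroup.mem_carrier[OF P s] by blast
qed

lemma normalizer_trivial: "a \<in> carrier G \<Longrightarrow> a \<in> normalizer G {\<one>}"
  using normalizer_iff[of "{\<one>}"] by simp

lemma is_cyclic_Mod_generate_insert:
  assumes P: "P \<lhd> G" and a: "a \<in> carrier G" and gen: "generate G (P \<union> {a}) = carrier G"
  shows "is_cyclic (G Mod P)"
proof -
  interpret pi: group_hom G "G Mod P" "\<lambda>x. P #> x"
    using normal.r_coset_hom_Mod[OF P] normal.factorgroup_is_group[OF P]
    by (intro group_hom.intro group_hom_axioms.intro is_group)
  let ?x = "P #> a"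
  have Pa: "P \<union> {a} \<subseteq> carrier G" using normal_imp_subgroup[OF P] subgroup.subset a by blast
  have xc: "?x \<in> carrier (G Mod P)" by (rule pi.hom_closed[OF a])
  have img: "(\<lambda>x. P #> x) ` (P \<union> {a}) \<subseteq> generate (G Mod P) {?x}"
  proof
    fix u assume "u \<in> (\<lambda>x. P #> x) ` (P \<union> {a})"
    then consider s where "s \<in> P" "u = P #> s" | "u = ?x" by blast
    then show "u \<in> generate (G Mod P) {?x}"
    proof cases
      case 1
      then have "u = \<one>\<^bsub>G Mod P\<^esub>"
        using subgroup.rcos_const[OF normal_imp_subgroup[OF P] is_group] by simp
      then show ?thesis using generate.one[of "G Mod P" "{?x}"] by (simp del: one_FactGroup)
    next
      case 2
      then show ?thesis by (simp add: generate.incl)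
    qed
  qed
  have "carrier (G Mod P) = (\<lambda>x. P #> x) ` generate G (P \<union> {a})"
    using gen carrier_FactGroup[of G P] by simp
  also have "\<dots> = generate (G Mod P) ((\<lambda>x. P #> x) ` (P \<union> {a}))"
    using pi.generate_img[OF Pa] by simp
  also have "\<dots> \<subseteq> generate (G Mod P) {?x}"
    by (rule pi.H.generate_subgroup_incl[OF img pi.H.generate_is_subgroup]) (use xc in blast)
  finally have "generate (G Mod P) {?x} = carrier (G Mod P)"
    using pi.H.generate_incl[of "{?x}"] xc by blast
  then show ?thesis unfolding is_cyclic_def using pi.H.is_group xc by blast
qed

lemma cyclic_by_p_generate_normalizer:
  assumes P: "subgroup P G" and pg: "p_group p (G\<lparr>carrier := P\<rparr>)" and a: "a \<in> normalizer G P"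
  shows "cyclic_by_p G p (generate G (P \<union> {a}))"
proof -
  let ?Q = "generate G (P \<union> {a})"
  let ?QG = "G\<lparr>carrier := ?Q\<rparr>"
  have Psub: "P \<subseteq> carrier G" by (rule subgroup.subset[OF P])
  have ac: "a \<in> carrier G" using a normalizer_iff[OF Psub] by blast
  have Qs: "subgroup ?Q G" using Psub ac by (intro generate_is_subgroup) blast
  have PaQ: "P \<union> {a} \<subseteq> ?Q" by (rule subsetI, rule generate.incl)
  have "P \<union> {a} \<subseteq> normalizer G P" using subgroup_subset_normalizer[OF P] a by blast
  then have Q_norm: "?Q \<subseteq> normalizer G P"
    by (rule generate_subgroup_incl[OF _ normalizer_imp_subgroup[OF Psub]])
  interpret QG: group ?QG by (rule subgroup_imp_group[OF Qs])
  have PQ: "subgroup P ?QG" using subgroup_incl[OF P Qs] PaQ by simp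
  have Pn: "P \<lhd> ?QG"
  proof (rule QG.normal_invI[OF PQ])
    fix x h assume x: "x \<in> carrier ?QG" and h: "h \<in> P"
    then have "x \<in> normalizer G P" using Q_norm by auto
    then have "(\<lambda>s. x \<otimes> s \<otimes> inv x) ` P = P" using normalizer_iff[OF Psub] by blast
    with h have "x \<otimes> h \<otimes> inv x \<in> P" by blast
    moreover have "inv\<^bsub>?QG\<^esub> x = inv x" using m_inv_consistent[OF Qs] x by simp
    ultimately show "x \<otimes>\<^bsub>?QG\<^esub> h \<otimes>\<^bsub>?QG\<^esub> inv\<^bsub>?QG\<^esub> x \<in> P" by simp
  qed
  have "a \<in> carrier ?QG" using PaQ by simp
  moreover have "generate ?QG (P \<union> {a}) = carrier ?QG"
    using generate_consistent[OF PaQ Qs] by simp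
  ultimately have "is_cyclic (?QG Mod P)" by (rule QG.is_cyclic_Mod_generate_insert[OF Pn])
  with Pn pg show ?thesis unfolding cyclic_by_p_def by blast
qed

lemma normal_closure_eq_carrier_frattini:
  assumes fin: "finite (carrier G)" and p: "Factorial_Ring.prime p" and S: "sylow_subgroup G p S"
    and gen: "normal_generators_mod G r z (sylow_gen G p)" and r: "0 < r"
    and n: "n \<in> sylow_gen G p" and z0: "z 0 = n \<otimes> a"
    and U: "U \<subseteq> carrier G" and SU: "S \<subseteq> U" and aU: "a \<in> U"
    and zU: "\<And>i. 0 < i \<Longrightarrow> i < r \<Longrightarrow> z i \<in> U"
  shows "normal_closure G U = carrier G"
proof -
  interpret K: normal "normal_closure G U" G by (rule normal_closure_normal[OF U])
  have UK: "U \<subseteq> normal_closure G U" by (rule normal_closure_superset[OF U])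
  with SU have "sylow_gen G p \<subseteq> normal_closure G U"
    using sylow_gen_subset_normal_closure[OF fin p S] normal_closure_least[OF K.normal_axioms]
    by blast
  moreover have "z i \<in> normal_closure G U" if "i < r" for i
  proof (cases "i = 0")
    case True
    with z0 K.m_closed[OF subsetD[OF calculation n] subsetD[OF UK aU]] show ?thesis by simp
  next
    case False
    with zU that UK show ?thesis by blast
  qed
  ultimately have "z ` {..<r} \<union> sylow_gen G p \<subseteq> normal_closure G U" by blast
  with gen show ?thesis
    using normal_closure_eq_carrier_trans[OF _ U] unfolding normal_generators_mod_def by blast
qed

lemma cyclic_by_p_normal_cover:
  assumes fin: "finite (carrier G)" and p: "Factorial_Ring.prime p" and r: "0 < r"
    and gen: "normal_generators_mod G r z (sylow_gen G p)"
  shows "\<exists>Q. (\<forall>i<r. subgroup (Q i) G \<and> cyclic_by_p G p (Q i))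
    \<and> normal_closure G (\<Union>i<r. Q i) = carrier G"
proof -
  have zc: "z \<in> {..<r} \<rightarrow> carrier G" using gen unfolding normal_generators_mod_def by blast
  obtain S where S: "sylow_subgroup G p S" using sylow_subgroup_exists[OF fin p] by blast
  have Ss: "subgroup S G" using S unfolding sylow_subgroup_def by blast
  obtain n a where n: "n \<in> sylow_gen G p" and a: "a \<in> normalizer G S" and z0: "z 0 = n \<otimes> a"
    using frattini_sylow[OF fin p S] zc r by blast
  define P where "P i = (if i = 0 then S else {\<one>})" for i :: nat
  define w where "w i = (if i = 0 then a else z i)" for i :: nat
  define Q where "Q i = generate G (P i \<union> {w i})" for i :: nat
  have P: "subgroup (P i) G" for i unfolding P_def using Ss triv_subgroup by simp
  have Pfin: "finite (P i)" for i using finite_subset[OF subgroup.subset[OF P] fin] .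
  have "card (P i) = p ^ (if i = 0 then multiplicity p (order G) else 0)" for i
    using S unfolding P_def sylow_subgroup_def by simp
  then have "p_group p (G\<lparr>carrier := P i\<rparr>)" for i by (rule p_group_subgroupI[OF P Pfin])
  moreover have w: "w i \<in> normalizer G (P i)" if "i < r" for i
    using a normalizer_trivial zc that unfolding P_def w_def by auto
  ultimately have cyc: "cyclic_by_p G p (Q i)" if "i < r" for i
    unfolding Q_def using cyclic_by_p_generate_normalizer[OF P] that by blast
  have "P i \<union> {w i} \<subseteq> carrier G" if "i < r" for i
    using subgroup.subset[OF P] w[OF that] normalizer_iff[OF subgroup.subset[OF P]] by blast
  then have Qs: "subgroup (Q i) G" if "i < r" for i
    unfolding Q_def using that by (intro generate_is_subgroup)
  have PwQ: "P i \<union> {w i} \<subseteq> Q i" for i unfolding Q_def by (rule subsetI, rule generate.incl)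
  have "normal_closure G (\<Union>i<r. Q i) = carrier G"
  proof (rule normal_closure_eq_carrier_frattini[OF fin p S gen r n z0])
    show "(\<Union>i<r. Q i) \<subseteq> carrier G" using subgroup.subset[OF Qs] by blast
    show "S \<subseteq> (\<Union>i<r. Q i)" and "a \<in> (\<Union>i<r. Q i)"
      using PwQ[of 0] r unfolding P_def w_def by auto
    show "z i \<in> (\<Union>i<r. Q i)" if "0 < i" "i < r" for i
      using PwQ[of i] that unfolding w_def by auto
  qed
  with Qs cyc show ?thesis by blast
qed

end

theorem mainTheorem5:
  fixes G :: "('a, 'b) monoid_scheme" and p :: nat
  assumes "group G" and "finite (carrier G)" and "Factorial_Ring.prime p"
  defines "r \<equiv> max (min_gens (abelianization (G Mod sylow_gen G p))) 1"
  shows "\<exists>Q :: nat \<Rightarrow> 'a set.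
           (\<forall>i < r. subgroup (Q i) G \<and> cyclic_by_p G p (Q i))
         \<and> generate G (\<Union>i < r. conj_closure G (Q i)) = carrier G"
proof -
  interpret group G by (rule assms(1))
  let ?N = "sylow_gen G p" and ?D = "derived G (carrier G)"
  have r: "0 < r" and d_r: "min_gens (abelianization (G Mod ?N)) \<le> r" unfolding r_def by auto
  have N: "?N \<lhd> G" by (rule sylow_gen_normal)
  obtain y where y: "y \<in> UNIV \<rightarrow> carrier G"
    and gen_d: "normal_generators_mod G (min_gens (abelianization (G Mod ?N))) y (?D \<union> ?N)"
    using normal_generators_mod_abelianization[OF assms(2) N] by blast
  have "?D \<union> ?N \<subseteq> carrier G"
    using derived_in_carrier[OF order_refl] subgroup.subset[OF normal_imp_subgroup[OF N]] by (rule Un_least)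
  with y have "normal_generators_mod G r y (?D \<union> ?N)"
    by (intro normal_generators_mod_mono[OF gen_d d_r]) auto
  then obtain z where "normal_generators_mod G r z ?N"
    using normal_generators_mod_remove_derived[OF assms(2) r N] by blast
  then obtain Q where Q: "\<forall>i<r. subgroup (Q i) G \<and> cyclic_by_p G p (Q i)"
    and gen: "normal_closure G (\<Union>i<r. Q i) = carrier G"
    using cyclic_by_p_normal_cover[OF assms(2,3) r] by blast
  have "generate G (\<Union>i<r. conj_closure G (Q i)) = carrier G"
    using gen unfolding normal_closure_def conj_closure_UN .
  with Q show ?thesis by (intro exI[of _ Q] conjI)
qed

end
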